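(* Let $a,c,p\in\mathbb{C}$ with $-c\notin\mathbb{N}\cup\{0\}$. Define sequences $(u_n)_{n\ge0}$ and $(v_n)_{n\ge0}$ by $u_0=1$, $u_1=\frac{a}{c}+ip$, $v_0=1$, $v_1=\frac{a}{c}-ip$ and, for all integers $n\ge1$, \[ u_{n+1}=\frac{a+ip(c+2n)+n}{(n+1)(c+n)}u_n-\frac{ip-p^2}{(n+1)(c+n)}u_{n-1}, \] \[ v_{n+1}=\frac{a-ip(c+2n)+n}{(n+1)(c+n)}v_n+\frac{ip+p^2}{(n+1)(c+n)}v_{n-1}. \] Then \[ \sin(pz)\,M(a,c;z)=\sum_{n=0}^\infty\frac{u_n-v_n}{2i}z^n,\qquad z\in\mathbb{C}. \]
   Context: Here $i$ is the imaginary unit. For $a\in\mathbb{C}$, $(a)_n=a(a+1)\cdots(a+n-1)$ denotes the Pochhammer symbol, with $(a)_0=1$. For $a,c\in\mathbb{C}$ with $-c\notin\mathbb{N}\cup\{0\}$, the confluent hypergeometric (Kummer) function is $M(a,c;z)=\sum_{n=0}^\infty \frac{(a)_n}{(c)_n\,n!}z^n$, $z\in\mathbb{C}$. *)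

theory Defs
  imports "HOL-Analysis.Analysis"
begin

definition kummerM :: "complex \<Rightarrow> complex \<Rightarrow> complex \<Rightarrow> complex" where
  "kummerM a c z = (\<Sum>n. pochhammer a n / (pochhammer c n * of_nat (fact n)) * z ^ n)"

text \<open>u_0 = 1, u_1 = a/c + ip, and for n \<ge> 1 (here n = m+1) the three-term recurrence.\<close>
fun u_seq :: "complex \<Rightarrow> complex \<Rightarrow> complex \<Rightarrow> nat \<Rightarrow> complex" where
  "u_seq a c p 0 = 1"
| "u_seq a c p (Suc 0) = a / c + \<i> * p"
| "u_seq a c p (Suc (Suc m)) =
     (a + \<i> * p * (c + 2 * of_nat (Suc m)) + of_nat (Suc m))
       / (of_nat (Suc (Suc m)) * (c + of_nat (Suc m))) * u_seq a c p (Suc m)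
     - (\<i> * p - p ^ 2) / (of_nat (Suc (Suc m)) * (c + of_nat (Suc m))) * u_seq a c p m"

fun v_seq :: "complex \<Rightarrow> complex \<Rightarrow> complex \<Rightarrow> nat \<Rightarrow> complex" where
  "v_seq a c p 0 = 1"
| "v_seq a c p (Suc 0) = a / c - \<i> * p"
| "v_seq a c p (Suc (Suc m)) =
     (a - \<i> * p * (c + 2 * of_nat (Suc m)) + of_nat (Suc m))
       / (of_nat (Suc (Suc m)) * (c + of_nat (Suc m))) * v_seq a c p (Suc m)
     + (\<i> * p + p ^ 2) / (of_nat (Suc (Suc m)) * (c + of_nat (Suc m))) * v_seq a c p m"

end

(* The Kummer series M = M(a,c;z) is annihilated by L = z D^2 + (c - z) D - a, since its
   coefficients satisfy (n+1)(c+n) m_(n+1) = (a+n) m_n. Conjugating L by e^(qz) gives an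
   operator whose coefficient recurrence is, for q = ip and q = -ip, exactly the recurrence
   defining u_n and v_n; as the initial values also agree, u_n and v_n are the Taylor
   coefficients of e^(ipz) M and e^(-ipz) M. Since M is entire (ratio test), the claim
   follows from sin w = (e^(iw) - e^(-iw)) / (2i). *)

theory Submission
  imports Defs
begin

definition kummer_coeff :: "'a::field_char_0 \<Rightarrow> 'a \<Rightarrow> nat \<Rightarrow> 'a" where
  "kummer_coeff a c n = pochhammer a n / (pochhammer c n * of_nat (fact n))"

definition kummer_fps :: "'a::field_char_0 \<Rightarrow> 'a \<Rightarrow> 'a fps" where
  "kummer_fps a c = Abs_fps (kummer_coeff a c)"

lemma fps_nth_kummer_fps [simp]: "fps_nth (kummer_fps a c) n = kummer_coeff a c n"
  by (simp add: kummer_fps_def)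

(* No hypothesis needed: if c + n = 0, both sides vanish since x / 0 = 0. *)
lemma kummer_coeff_Suc:
  "kummer_coeff a c (Suc n)
     = (a + of_nat n) / ((of_nat n + 1) * (c + of_nat n)) * kummer_coeff a c n"
  by (simp add: kummer_coeff_def pochhammer_rec' algebra_simps)

definition kummer_operator :: "'a::field_char_0 \<Rightarrow> 'a \<Rightarrow> 'a fps \<Rightarrow> 'a fps" where
  "kummer_operator a c G =
     fps_X * fps_deriv (fps_deriv G) + fps_const c * fps_deriv G - fps_X * fps_deriv G
     - fps_const a * G"

(* The Kummer operator conjugated by multiplication with e^(qz). *)
definition twisted_kummer_operator ::
    "'a::field_char_0 \<Rightarrow> 'a \<Rightarrow> 'a \<Rightarrow> 'a fps \<Rightarrow> 'a fps" where
  "twisted_kummer_operator q a c F =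
     kummer_operator (q * c + a) c F - fps_const (2 * q) * (fps_X * fps_deriv F)
     + fps_const (q\<^sup>2 + q) * (fps_X * F)"

lemma kummer_operator_kummer_fps:
  fixes a c :: "'a::field_char_0"
  assumes "\<And>n. c + of_nat n \<noteq> 0"
  shows "kummer_operator a c (kummer_fps a c) = 0"
proof (rule fps_ext)
  fix n
  have "of_nat n + 1 \<noteq> (0::'a)"
    using of_nat_neq_0[of n] by (simp add: add.commute)
  with assms have "(of_nat n + 1) * (c + of_nat n) * kummer_coeff a c (Suc n)
      = (a + of_nat n) * kummer_coeff a c n"
    by (simp add: kummer_coeff_Suc)
  then show "fps_nth (kummer_operator a c (kummer_fps a c)) n = fps_nth 0 n"
    by (cases n) (simp_all add: kummer_operator_def algebra_simps)
qed

lemma twisted_kummer_operator_fps_exp_mult: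
  fixes q :: "'a::field_char_0"
  shows "twisted_kummer_operator q a c (fps_exp q * G) = fps_exp q * kummer_operator a c G"
proof -
  define E where "E = fps_exp q"
  define Q where "Q = fps_const q"
  have dE: "fps_deriv E = Q * E"
    by (simp add: E_def Q_def)
  have dEG: "fps_deriv (E * G) = Q * E * G + E * fps_deriv G"
    by (simp add: dE)
  have ddEG: "fps_deriv (fps_deriv (E * G))
      = Q * (Q * E * G + E * fps_deriv G) + Q * E * fps_deriv G + E * fps_deriv (fps_deriv G)"
    by (simp add: dEG dE Q_def algebra_simps)
  have const_eqs: "fps_const (2 * q) = 2 * Q" "fps_const (q\<^sup>2 + q) = Q\<^sup>2 + Q"
    "fps_const (q * c + a) = Q * fps_const c + fps_const a"
    by (simp_all add: Q_def numeral_fps_const)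
  show ?thesis
    unfolding twisted_kummer_operator_def kummer_operator_def const_eqs E_def[symmetric] ddEG dEG
    by (simp add: dE algebra_simps power2_eq_square, simp add: Q_def)
qed

lemma twisted_kummer_operator_nth:
  fixes a c q :: "'a::field_char_0"
  assumes "twisted_kummer_operator q a c F = 0"
  shows "of_nat (Suc (Suc m)) * (c + of_nat (Suc m)) * fps_nth F (Suc (Suc m))
           = (a + q * (c + 2 * of_nat (Suc m)) + of_nat (Suc m)) * fps_nth F (Suc m)
             - (q\<^sup>2 + q) * fps_nth F m"
proof -
  have "fps_nth (twisted_kummer_operator q a c F) (Suc m) = 0"
    using assms by simp
  then have "of_nat (Suc m) * (of_nat (Suc (Suc m)) * fps_nth F (Suc (Suc m)))
      + c * (of_nat (Suc (Suc m)) * fps_nth F (Suc (Suc m)))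
      - of_nat (Suc m) * fps_nth F (Suc m) - (q * c + a) * fps_nth F (Suc m)
      - 2 * q * (of_nat (Suc m) * fps_nth F (Suc m)) + (q\<^sup>2 + q) * fps_nth F m = 0"
    by (simp add: twisted_kummer_operator_def kummer_operator_def del: of_nat_Suc)
  then show ?thesis by (simp add: algebra_simps)
qed

lemma fps_exp_mult_kummer_nth_Suc_Suc:
  fixes a c q :: "'a::field_char_0"
  assumes "\<And>n. c + of_nat n \<noteq> 0"
  defines "F \<equiv> fps_exp q * kummer_fps a c"
  shows "fps_nth F (Suc (Suc m))
           = (a + q * (c + 2 * of_nat (Suc m)) + of_nat (Suc m))
               / (of_nat (Suc (Suc m)) * (c + of_nat (Suc m))) * fps_nth F (Suc m)
             - (q\<^sup>2 + q) / (of_nat (Suc (Suc m)) * (c + of_nat (Suc m))) * fps_nth F m"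
proof -
  define D :: 'a where "D = of_nat (Suc (Suc m)) * (c + of_nat (Suc m))"
  have "D \<noteq> 0"
    using assms(1)[of "Suc m"] by (simp add: D_def del: of_nat_Suc)
  moreover have "D * fps_nth F (Suc (Suc m))
      = (a + q * (c + 2 * of_nat (Suc m)) + of_nat (Suc m)) * fps_nth F (Suc m)
        - (q\<^sup>2 + q) * fps_nth F m"
    unfolding D_def F_def
    by (rule twisted_kummer_operator_nth)
      (simp add: twisted_kummer_operator_fps_exp_mult kummer_operator_kummer_fps assms)
  ultimately have "fps_nth F (Suc (Suc m))
      = ((a + q * (c + 2 * of_nat (Suc m)) + of_nat (Suc m)) * fps_nth F (Suc m)
          - (q\<^sup>2 + q) * fps_nth F m) / D"
    by (simp add: eq_divide_eq mult.commute)
  then show ?thesis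
    unfolding D_def[symmetric] by (simp only: diff_divide_distrib times_divide_eq_left)
qed

lemma second_order_recurrence_unique:
  assumes "f 0 = g 0" "f 1 = g 1"
    and "\<And>m. f (Suc (Suc m)) = R m (f (Suc m)) (f m)"
    and "\<And>m. g (Suc (Suc m)) = R m (g (Suc m)) (g m)"
  shows "f = g"
proof
  fix n
  show "f n = g n"
    by (induction n rule: induct_nat_012)
      (simp_all add: assms(1,3,4) assms(2)[unfolded One_nat_def])
qed

lemma fps_exp_mult_kummer_nth_unique:
  fixes a c q :: "'a::field_char_0"
  assumes c: "\<And>n. c + of_nat n \<noteq> 0"
    and "f 0 = 1" "f 1 = a / c + q"
    and "\<And>m. f (Suc (Suc m))
           = (a + q * (c + 2 * of_nat (Suc m)) + of_nat (Suc m))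
               / (of_nat (Suc (Suc m)) * (c + of_nat (Suc m))) * f (Suc m)
             - (q\<^sup>2 + q) / (of_nat (Suc (Suc m)) * (c + of_nat (Suc m))) * f m"
  shows "f = fps_nth (fps_exp q * kummer_fps a c)"
  by (rule second_order_recurrence_unique[where R = "\<lambda>m x y.
        (a + q * (c + 2 * of_nat (Suc m)) + of_nat (Suc m))
          / (of_nat (Suc (Suc m)) * (c + of_nat (Suc m))) * x
        - (q\<^sup>2 + q) / (of_nat (Suc (Suc m)) * (c + of_nat (Suc m))) * y"])
    (simp_all add: assms(2,4) assms(3)[unfolded One_nat_def]
      fps_exp_mult_kummer_nth_Suc_Suc[OF c] kummer_coeff_def)

lemma u_seq_eq_fps_nth:
  assumes "\<And>n. c + of_nat n \<noteq> 0"
  shows "u_seq a c p = fps_nth (fps_exp (\<i> * p) * kummer_fps a c)"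
proof -
  have q: "(\<i> * p)\<^sup>2 + \<i> * p = \<i> * p - p\<^sup>2"
    by (simp add: power_mult_distrib)
  show ?thesis
    by (rule fps_exp_mult_kummer_nth_unique[OF assms]) (simp_all add: q)
qed

lemma v_seq_eq_fps_nth:
  assumes "\<And>n. c + of_nat n \<noteq> 0"
  shows "v_seq a c p = fps_nth (fps_exp (- \<i> * p) * kummer_fps a c)"
proof -
  have q: "((\<i> * p)\<^sup>2 - \<i> * p) * x = - ((\<i> * p + p\<^sup>2) * x)" for x
    by (simp add: algebra_simps)
  show ?thesis
    by (rule fps_exp_mult_kummer_nth_unique[OF assms]) (simp_all add: q)
qed

lemma summable_ratio_tendsto_0:
  fixes f :: "nat \<Rightarrow> 'a::{real_normed_div_algebra, banach}"
  assumes ratio: "\<And>n. f (Suc n) = r n * f n" and lim: "r \<longlonglongrightarrow> 0"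
  shows "summable f"
proof -
  have "\<forall>\<^sub>F n in sequentially. norm (r n) < 1 / 2"
    using order_tendstoD(2)[OF tendsto_norm_zero[OF lim], of "1 / 2"] by simp
  then obtain N where N: "\<And>n. n \<ge> N \<Longrightarrow> norm (r n) < 1 / 2"
    unfolding eventually_sequentially by blast
  show ?thesis
  proof (rule summable_ratio_test[of "1 / 2" N])
    fix n assume "n \<ge> N"
    then have "norm (r n) * norm (f n) \<le> 1 / 2 * norm (f n)"
      using N[of n] by (intro mult_right_mono) simp_all
    then show "norm (f (Suc n)) \<le> 1 / 2 * norm (f n)"
      by (simp add: ratio norm_mult)
  qed simp
qed

lemma fps_conv_radius_kummer_fps:
  fixes a c :: complex
  assumes "\<And>n. c + of_nat n \<noteq> 0"
  shows "fps_conv_radius (kummer_fps a c) = \<infinity>"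
  unfolding fps_conv_radius_def
proof (rule conv_radius_inftyI'')
  fix z :: complex
  have at_infinity: "filterlim (\<lambda>n. w + of_nat n :: complex) at_infinity sequentially" for w
    by (rule tendsto_add_filterlim_at_infinity[OF tendsto_const tendsto_of_nat])
  have "(\<lambda>n. 1 + (a - c) / (c + of_nat n)) \<longlonglongrightarrow> 1 + 0"
    by (intro tendsto_add tendsto_const tendsto_divide_0[OF tendsto_const at_infinity])
  moreover have "(\<lambda>n. 1 + (a - c) / (c + of_nat n))
      = (\<lambda>n. (a + of_nat n) / (c + of_nat n))"
    using assms by (auto simp: field_simps)
  ultimately have "(\<lambda>n. (a + of_nat n) / (c + of_nat n) * (z / (1 + of_nat n)))
      \<longlonglongrightarrow> 1 * 0"
    by (intro tendsto_mult tendsto_divide_0[OF tendsto_const at_infinity]) simp_all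
  then have ratio_lim:
      "(\<lambda>n. (a + of_nat n) / (c + of_nat n) * (z / (1 + of_nat n))) \<longlonglongrightarrow> 0"
    by simp
  show "summable (\<lambda>n. fps_nth (kummer_fps a c) n * z ^ n)"
    by (rule summable_ratio_tendsto_0[OF _ ratio_lim]) (simp add: kummer_coeff_Suc mult_ac)
qed

lemma sums_fps_exp_mult_kummer_fps:
  fixes a c q z :: complex
  assumes "\<And>n. c + of_nat n \<noteq> 0"
  shows "(\<lambda>n. fps_nth (fps_exp q * kummer_fps a c) n * z ^ n)
           sums (exp (q * z) * kummerM a c z)"
proof -
  have radius: "fps_conv_radius (kummer_fps a c) = \<infinity>"
    by (rule fps_conv_radius_kummer_fps[OF assms])
  then have "fps_conv_radius (fps_exp q * kummer_fps a c) = \<infinity>"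
    using fps_conv_radius_mult[of "fps_exp q" "kummer_fps a c"] by simp
  then have "(\<lambda>n. fps_nth (fps_exp q * kummer_fps a c) n * z ^ n)
      sums eval_fps (fps_exp q * kummer_fps a c) z"
    by (intro sums_eval_fps) simp
  also have "eval_fps (fps_exp q * kummer_fps a c) z = exp (q * z) * eval_fps (kummer_fps a c) z"
    using radius by (simp add: eval_fps_mult)
  also have "eval_fps (kummer_fps a c) z = kummerM a c z"
    by (simp add: eval_fps_def kummerM_def kummer_coeff_def)
  finally show ?thesis .
qed

theorem theorem2p4:
  fixes a c p z :: complex
  assumes "\<forall>k::nat. c \<noteq> - of_nat k"
  shows "(\<lambda>n. (u_seq a c p n - v_seq a c p n) / (2 * \<i>) * z ^ n) sums (sin (p * z) * kummerM a c z)"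
proof -
  have c_not_nonpos: "\<And>n. c + of_nat n \<noteq> 0"
    using assms by (simp add: add_eq_0_iff2)
  have "(\<lambda>n. (u_seq a c p n * z ^ n - v_seq a c p n * z ^ n) / (2 * \<i>))
      sums ((exp (\<i> * p * z) * kummerM a c z - exp (- \<i> * p * z) * kummerM a c z)
              / (2 * \<i>))"
    unfolding u_seq_eq_fps_nth[OF c_not_nonpos] v_seq_eq_fps_nth[OF c_not_nonpos]
    by (intro sums_divide sums_diff sums_fps_exp_mult_kummer_fps c_not_nonpos)
  also have "\<dots> = sin (p * z) * kummerM a c z"
    by (simp add: sin_exp_eq algebra_simps diff_divide_distrib)
  finally show ?thesis
    by (simp add: algebra_simps diff_divide_distrib)
qed

end
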